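(* Let $\lambda>0$, $1<p<\infty$, $\alpha\in\mathbb R$, and $w(t):=t^{\alpha}$ on $\mathbb R_+=(0,\infty)$. Then (1) $w\in A_p(\mu)$ if and only if $-1-2\lambda<\alpha<p-1+2\lambda(p-1)$; (2) $w\in \widetilde A_{p,\lambda}$ if and only if $-1<\alpha<p-1+(2\lambda+1)p$.
   Context: On $\mathbb R_+=(0,\infty)$ let $d\mu(x)=x^{2\lambda}\,dx$ and $d\nu_\lambda(x)=x^{2\lambda+1}\,dx$, where $dx$ is Lebesgue measure; "interval" means an interval $B=(a,b)\subset\mathbb R_+$; $p'=p/(p-1)$. $A_p(\mu)$ is the classical Muckenhoupt class on $(\mathbb R_+,|\cdot|,\mu)$: $w\ge0$ with $\sup_B\big(\frac1{\mu(B)}\int_B w\,d\mu\big)\big(\frac1{\mu(B)}\int_B w^{-1/(p-1)}\,d\mu\big)^{p-1}<\infty$, the supremum over intervals $B\subset\mathbb R_+$. $\widetilde A_{p,\lambda}$ is the class of non-negative measurable $w$ for which there is $C>0$ such that for every interval $B\subset\mathbb R_+$, $\big(\frac1{\nu_\lambda(B)}\int_B w(t)\,dt\big)\big(\frac1{\nu_\lambda(B)}\int_B t^{(2\lambda+1)p'}w(t)^{-\frac1{p-1}}\,dt\big)^{p-1}<C.$ *)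

theory Defs
  imports "HOL-Analysis.Analysis"
begin

definition int_on :: "real \<Rightarrow> real \<Rightarrow> (real \<Rightarrow> ennreal) \<Rightarrow> ennreal" where
  "int_on a b f = (\<integral>\<^sup>+ x \<in> {a<..<b}. f x \<partial>lborel)"

definition neg_pow :: "real \<Rightarrow> real \<Rightarrow> ennreal" where
  "neg_pow p v = (if v = 0 then top else ennreal (v powr (-1 / (p - 1))))"

definition mu_meas :: "real \<Rightarrow> real \<Rightarrow> real \<Rightarrow> real" where
  "mu_meas lam a b = enn2real (int_on a b (\<lambda>x. ennreal (x powr (2 * lam))))"

definition nu_meas :: "real \<Rightarrow> real \<Rightarrow> real \<Rightarrow> real" where
  "nu_meas lam a b = enn2real (int_on a b (\<lambda>x. ennreal (x powr (2 * lam + 1))))"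

definition conj_exp :: "real \<Rightarrow> real" where
  "conj_exp p = p / (p - 1)"

definition Ap_mu :: "real \<Rightarrow> real \<Rightarrow> (real \<Rightarrow> real) set" where
  "Ap_mu lam p = {w. w \<in> borel_measurable lborel \<and> (\<forall>t>0. 0 \<le> w t) \<and>
     (\<exists>C::real. \<forall>a b. 0 \<le> a \<and> a < b \<longrightarrow>
        int_on a b (\<lambda>x. ennreal (w x * x powr (2 * lam))) < top \<and>
        int_on a b (\<lambda>x. neg_pow p (w x) * ennreal (x powr (2 * lam))) < top \<and>
        (enn2real (int_on a b (\<lambda>x. ennreal (w x * x powr (2 * lam)))) / mu_meas lam a b) *
        (enn2real (int_on a b (\<lambda>x. neg_pow p (w x) * ennreal (x powr (2 * lam)))) / mu_meas lam a b)
           powr (p - 1) \<le> C)}"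

definition Ap_tilde :: "real \<Rightarrow> real \<Rightarrow> (real \<Rightarrow> real) set" where
  "Ap_tilde p lam = {w. w \<in> borel_measurable lborel \<and> (\<forall>t>0. 0 \<le> w t) \<and>
     (\<exists>C::real. \<forall>a b. 0 \<le> a \<and> a < b \<longrightarrow>
        int_on a b (\<lambda>t. ennreal (w t)) < top \<and>
        int_on a b (\<lambda>t. ennreal (t powr ((2 * lam + 1) * conj_exp p)) * neg_pow p (w t)) < top \<and>
        (enn2real (int_on a b (\<lambda>t. ennreal (w t))) / nu_meas lam a b) *
        (enn2real (int_on a b (\<lambda>t. ennreal (t powr ((2 * lam + 1) * conj_exp p)) * neg_pow p (w t)))
           / nu_meas lam a b) powr (p - 1) < C)}"

end

theory Submission
  imports Defs
begin

text \<open>For w = t powr \<alpha> both classes only involve integrals of power densities x powr \<beta> over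
  intervals (a,b) with 0 \<le> a. Such an integral is finite iff \<beta> > -1 (the only possible divergence
  is at 0), and then it is at most a constant times b powr \<beta> * (b - a), and for \<beta> \<ge> 0 also at
  least a constant times that quantity. Each A_p quotient is therefore bounded by a constant
  times a power of b, and for power weights the exponent of b is 0. So membership in either
  class just says that the weight and its dual weight are integrable near 0, which gives the
  stated ranges of \<alpha>.\<close>

definition power_mass :: "real \<Rightarrow> real \<Rightarrow> real \<Rightarrow> real" where
  "power_mass \<beta> a b = (b powr (\<beta> + 1) - a powr (\<beta> + 1)) / (\<beta> + 1)"

lemma int_on_cong:
  assumes "\<And>x. a < x \<Longrightarrow> x < b \<Longrightarrow> f x = g x"
  shows "int_on a b f = int_on a b g"
  unfolding int_on_def by (intro nn_integral_cong) (auto simp: assms split: split_indicator)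

lemma int_on_mono:
  assumes "a' \<le> a" "b \<le> b'" "\<And>x. a < x \<Longrightarrow> x < b \<Longrightarrow> f x \<le> g x"
  shows "int_on a b f \<le> int_on a' b' g"
  unfolding int_on_def using assms by (intro nn_integral_mono) (auto split: split_indicator)

lemma int_on_powr:
  fixes \<beta> a b :: real
  assumes "\<beta> > -1" "0 \<le> a" "a \<le> b"
  shows "int_on a b (\<lambda>x. ennreal (x powr \<beta>)) = ennreal (power_mass \<beta> a b)"
proof -
  let ?f = "\<lambda>x. x powr \<beta>"
  have to_b: "(?f has_integral (b powr (\<beta> + 1) / (\<beta> + 1))) {0..b}"
    and to_a: "(?f has_integral (a powr (\<beta> + 1) / (\<beta> + 1))) {0..a}"
    using has_integral_powr_from_0 assms by auto
  have "?f integrable_on {a..b}"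
    using integrable_subinterval_real[OF has_integral_integrable[OF to_b]] assms by auto
  moreover have "integral {0..a} ?f + integral {a..b} ?f = integral {0..b} ?f"
    using Henstock_Kurzweil_Integration.integral_combine[where a=0 and c=a and b=b and f="?f"]
      has_integral_integrable[OF to_b] assms by auto
  then have "integral {a..b} ?f = power_mass \<beta> a b"
    using integral_unique[OF to_a] integral_unique[OF to_b]
    unfolding power_mass_def by (simp add: diff_divide_distrib)
  ultimately have "(?f has_integral power_mass \<beta> a b) {a<..<b}"
    using has_integral_Icc_iff_Ioo by (metis has_integral_integrable_integral)
  from nn_integral_has_integral_lebesgue'[OF _ this]
  show ?thesis unfolding int_on_def by simp
qed

lemma power_mass_pos:
  assumes "\<beta> > -1" "0 \<le> a" "a < b"
  shows "power_mass \<beta> a b > 0"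
proof -
  have "a powr (\<beta> + 1) < b powr (\<beta> + 1)"
    using assms by (cases "a = 0") (auto intro: powr_less_mono2)
  then show ?thesis using assms unfolding power_mass_def by auto
qed

lemma int_on_powr_minus_one:
  assumes "0 < e" "e \<le> 1"
  shows "int_on e 1 (\<lambda>x. ennreal (x powr -1)) = ennreal (- ln e)"
proof -
  have "((\<lambda>x. x powr -1) has_integral (ln 1 - ln e)) {e..1}"
  proof (rule fundamental_theorem_of_calculus)
    fix x assume "x \<in> {e..1}"
    then have "x > 0" using assms by auto
    then have "(ln has_real_derivative (x powr -1)) (at x within {e..1})"
      by (auto intro!: derivative_eq_intros simp: powr_minus divide_inverse)
    then show "(ln has_vector_derivative (x powr -1)) (at x within {e..1})"
      by (simp add: has_real_derivative_iff_has_vector_derivative)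
  qed (use assms in auto)
  then have "((\<lambda>x. x powr -1) has_integral (- ln e)) {e<..<1}"
    using has_integral_Icc_iff_Ioo[THEN iffD1] by simp
  from nn_integral_has_integral_lebesgue'[OF _ this]
  show ?thesis unfolding int_on_def by simp
qed

lemma int_on_powr_0_1_eq_top:
  assumes "\<beta> \<le> -1"
  shows "int_on 0 1 (\<lambda>x. ennreal (x powr \<beta>)) = top"
proof (rule ccontr)
  assume "int_on 0 1 (\<lambda>x. ennreal (x powr \<beta>)) \<noteq> top"
  then obtain r where r: "int_on 0 1 (\<lambda>x. ennreal (x powr \<beta>)) = ennreal r" "r \<ge> 0"
    using ennreal_cases by (metis less_top)
  define e where "e = exp (-(r + 1))"
  have e: "0 < e" "e \<le> 1" using r unfolding e_def by auto
  have "ennreal (r + 1) = int_on e 1 (\<lambda>x. ennreal (x powr -1))"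
    using int_on_powr_minus_one[OF e] unfolding e_def by (simp add: add.commute)
  also have "\<dots> \<le> int_on 0 1 (\<lambda>x. ennreal (x powr \<beta>))"
    using e assms by (intro int_on_mono ennreal_leI powr_mono') auto
  finally show False using r by simp
qed

lemma int_on_powr_0_1_finite_iff:
  "int_on 0 1 (\<lambda>x. ennreal (x powr \<beta>)) < top \<longleftrightarrow> \<beta> > -1"
  using int_on_powr[of \<beta> 0 1] int_on_powr_0_1_eq_top[of \<beta>] by (cases "\<beta> > -1") auto

lemma power_mass_mvt:
  assumes "\<beta> > -1" "0 < a" "a < b"
  obtains z where "a < z" "z < b" "power_mass \<beta> a b = (b - a) * z powr \<beta>"
proof -
  have "((\<lambda>x. x powr (\<beta> + 1)) has_real_derivative (\<beta> + 1) * x powr (\<beta> + 1 - 1)) (at x)"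
    if "a \<le> x" "x \<le> b" for x
    using assms that by (intro has_real_derivative_powr) auto
  from MVT2[OF assms(3) this] obtain z where
    "a < z" "z < b" "b powr (\<beta> + 1) - a powr (\<beta> + 1) = (b - a) * ((\<beta> + 1) * z powr \<beta>)"
    by auto
  with assms show thesis by (intro that[of z]) (auto simp: power_mass_def)
qed

lemma power_mass_le:
  assumes "\<beta> > -1" "0 \<le> a" "a < b"
  shows "power_mass \<beta> a b \<le> (2 / (\<beta> + 1) + 1 + 2 powr -\<beta>) * b powr \<beta> * (b - a)"
proof (cases "a \<le> b / 2")
  case True
  have b: "b > 0" using assms by auto
  have "power_mass \<beta> a b \<le> b powr \<beta> * b / (\<beta> + 1)"
    unfolding power_mass_def using assms b by (intro divide_right_mono) (auto simp: powr_add)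
  also have "\<dots> \<le> b powr \<beta> * (2 * (b - a)) / (\<beta> + 1)"
    using True assms b by (intro divide_right_mono mult_left_mono) auto
  also have "\<dots> = (2 / (\<beta> + 1)) * b powr \<beta> * (b - a)" by simp
  also have "\<dots> \<le> (2 / (\<beta> + 1) + 1 + 2 powr -\<beta>) * b powr \<beta> * (b - a)"
    using assms by (intro mult_right_mono) auto
  finally show ?thesis .
next
  case False
  then have a: "a > 0" using assms by auto
  obtain z where z: "a < z" "z < b" "power_mass \<beta> a b = (b - a) * z powr \<beta>"
    using power_mass_mvt[OF assms(1) a assms(3)] by blast
  have "z powr \<beta> \<le> b powr \<beta> + (b / 2) powr \<beta>"
  proof (cases "\<beta> \<ge> 0")
    case True
    then have "z powr \<beta> \<le> b powr \<beta>" using z a by (intro powr_mono2) auto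
    then show ?thesis using powr_ge_zero[of "b / 2" \<beta>] by linarith
  next
    case False
    then have "z powr \<beta> \<le> (b / 2) powr \<beta>" using z a \<open>\<not> a \<le> b / 2\<close> by (intro powr_mono2') auto
    then show ?thesis using powr_ge_zero[of b \<beta>] by linarith
  qed
  also have "(b / 2) powr \<beta> = 2 powr -\<beta> * b powr \<beta>"
    using a z by (simp add: powr_divide powr_minus_divide)
  finally have "z powr \<beta> \<le> (1 + 2 powr -\<beta>) * b powr \<beta>"
    by (simp add: distrib_right)
  then have "power_mass \<beta> a b \<le> (b - a) * ((1 + 2 powr -\<beta>) * b powr \<beta>)"
    using z by (simp add: mult_left_mono)
  also have "\<dots> \<le> (2 / (\<beta> + 1) + 1 + 2 powr -\<beta>) * b powr \<beta> * (b - a)"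
    using assms by (simp add: algebra_simps)
  finally show ?thesis .
qed

lemma power_mass_ge:
  assumes "\<gamma> \<ge> 0" "0 \<le> a" "a < b"
  shows "power_mass \<gamma> a b \<ge> 2 powr (-\<gamma> - 1) * b powr \<gamma> * (b - a)"
proof -
  define m where "m = (a + b) / 2"
  have m: "0 < m" "a < m" "m < b" using assms unfolding m_def by auto
  obtain z where z: "m < z" "z < b" "power_mass \<gamma> m b = (b - m) * z powr \<gamma>"
    using power_mass_mvt[of \<gamma> m b] m assms by auto
  have "2 powr (-\<gamma> - 1) * b powr \<gamma> * (b - a) = (b / 2) powr \<gamma> * (b - m)"
    using m by (simp add: m_def powr_divide powr_diff powr_minus_divide field_simps)
  also have "\<dots> \<le> z powr \<gamma> * (b - m)"
    using z m assms unfolding m_def by (intro mult_right_mono powr_mono2) auto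
  also have "\<dots> = power_mass \<gamma> m b" using z by simp
  also have "\<dots> \<le> power_mass \<gamma> a b"
    unfolding power_mass_def using assms m by (intro divide_right_mono diff_left_mono powr_mono2) auto
  finally show ?thesis .
qed

lemma power_mass_ratio_le:
  assumes "\<beta> > -1" "\<gamma> \<ge> 0"
  obtains K where "K \<ge> 0"
    "\<And>a b. 0 \<le> a \<Longrightarrow> a < b \<Longrightarrow> power_mass \<beta> a b / power_mass \<gamma> a b \<le> K * b powr (\<beta> - \<gamma>)"
proof
  define c where "c = 2 powr (-\<gamma> - 1)"
  define K where "K = 2 / (\<beta> + 1) + 1 + 2 powr -\<beta>"
  have c: "c > 0" unfolding c_def by simp
  have "K \<ge> 0" unfolding K_def using assms by (intro add_nonneg_nonneg) auto
  then show "K / c \<ge> 0" using c by simp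
  fix a b :: real assume ab: "0 \<le> a" "a < b"
  have "power_mass \<beta> a b / power_mass \<gamma> a b \<le> (K * b powr \<beta> * (b - a)) / (c * b powr \<gamma> * (b - a))"
    using power_mass_le[OF assms(1) ab] power_mass_ge[OF assms(2) ab] power_mass_pos[OF assms(1) ab] c ab
    unfolding K_def c_def by (intro frac_le) auto
  also have "\<dots> = K / c * b powr (\<beta> - \<gamma>)"
    using ab c by (simp add: powr_diff field_simps)
  finally show "power_mass \<beta> a b / power_mass \<gamma> a b \<le> K / c * b powr (\<beta> - \<gamma>)" .
qed

lemma power_mass_Ap_bounded:
  assumes "\<beta>\<^sub>1 > -1" "\<beta>\<^sub>2 > -1" "\<gamma> \<ge> 0" "p > 1"
    and balanced: "\<beta>\<^sub>1 - \<gamma> + (\<beta>\<^sub>2 - \<gamma>) * (p - 1) = 0"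
  obtains C where "\<And>a b. 0 \<le> a \<Longrightarrow> a < b \<Longrightarrow>
    (power_mass \<beta>\<^sub>1 a b / power_mass \<gamma> a b) * (power_mass \<beta>\<^sub>2 a b / power_mass \<gamma> a b) powr (p - 1) \<le> C"
proof -
  obtain K\<^sub>1 where K\<^sub>1: "K\<^sub>1 \<ge> 0"
    "\<And>a b. 0 \<le> a \<Longrightarrow> a < b \<Longrightarrow> power_mass \<beta>\<^sub>1 a b / power_mass \<gamma> a b \<le> K\<^sub>1 * b powr (\<beta>\<^sub>1 - \<gamma>)"
    using power_mass_ratio_le[OF assms(1,3)] by blast
  obtain K\<^sub>2 where K\<^sub>2: "K\<^sub>2 \<ge> 0"
    "\<And>a b. 0 \<le> a \<Longrightarrow> a < b \<Longrightarrow> power_mass \<beta>\<^sub>2 a b / power_mass \<gamma> a b \<le> K\<^sub>2 * b powr (\<beta>\<^sub>2 - \<gamma>)"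
    using power_mass_ratio_le[OF assms(2,3)] by blast
  have "(power_mass \<beta>\<^sub>1 a b / power_mass \<gamma> a b) * (power_mass \<beta>\<^sub>2 a b / power_mass \<gamma> a b) powr (p - 1)
      \<le> K\<^sub>1 * K\<^sub>2 powr (p - 1)" if ab: "0 \<le> a" "a < b" for a b
  proof -
    have "\<gamma> > -1" using assms by simp
    then have pos: "power_mass \<beta>\<^sub>1 a b / power_mass \<gamma> a b \<ge> 0" "power_mass \<beta>\<^sub>2 a b / power_mass \<gamma> a b \<ge> 0"
      using power_mass_pos[OF _ ab] assms by (auto intro: divide_nonneg_pos less_imp_le)
    have "(power_mass \<beta>\<^sub>1 a b / power_mass \<gamma> a b) * (power_mass \<beta>\<^sub>2 a b / power_mass \<gamma> a b) powr (p - 1)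
        \<le> (K\<^sub>1 * b powr (\<beta>\<^sub>1 - \<gamma>)) * (K\<^sub>2 * b powr (\<beta>\<^sub>2 - \<gamma>)) powr (p - 1)"
      using K\<^sub>1(2)[OF ab] K\<^sub>2(2)[OF ab] pos assms(4) by (intro mult_mono powr_mono2) auto
    also have "\<dots> = K\<^sub>1 * K\<^sub>2 powr (p - 1) * b powr (\<beta>\<^sub>1 - \<gamma> + (\<beta>\<^sub>2 - \<gamma>) * (p - 1))"
      using K\<^sub>2(1) by (simp add: powr_mult powr_powr powr_add)
    also have "\<dots> = K\<^sub>1 * K\<^sub>2 powr (p - 1)"
      using ab by (simp add: balanced)
    finally show ?thesis .
  qed
  then show thesis by (rule that)
qed

text \<open>The shape both classes take for a power weight: weight and dual weight become power
  densities, and averages are taken with respect to x powr \<gamma> dx.\<close>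
definition powr_Ap_condition :: "real \<Rightarrow> real \<Rightarrow> real \<Rightarrow> real \<Rightarrow> bool" where
  "powr_Ap_condition p \<gamma> \<beta>\<^sub>1 \<beta>\<^sub>2 \<longleftrightarrow> (\<exists>C. \<forall>a b. 0 \<le> a \<and> a < b \<longrightarrow>
     int_on a b (\<lambda>x. ennreal (x powr \<beta>\<^sub>1)) < top \<and>
     int_on a b (\<lambda>x. ennreal (x powr \<beta>\<^sub>2)) < top \<and>
     (enn2real (int_on a b (\<lambda>x. ennreal (x powr \<beta>\<^sub>1))) / enn2real (int_on a b (\<lambda>x. ennreal (x powr \<gamma>)))) *
     (enn2real (int_on a b (\<lambda>x. ennreal (x powr \<beta>\<^sub>2))) / enn2real (int_on a b (\<lambda>x. ennreal (x powr \<gamma>))))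
       powr (p - 1) \<le> C)"

lemma powr_Ap_condition_iff:
  assumes "\<gamma> \<ge> 0" "p > 1" "\<beta>\<^sub>1 - \<gamma> + (\<beta>\<^sub>2 - \<gamma>) * (p - 1) = 0"
  shows "powr_Ap_condition p \<gamma> \<beta>\<^sub>1 \<beta>\<^sub>2 \<longleftrightarrow> \<beta>\<^sub>1 > -1 \<and> \<beta>\<^sub>2 > -1"
proof
  assume "powr_Ap_condition p \<gamma> \<beta>\<^sub>1 \<beta>\<^sub>2"
  then have "int_on 0 1 (\<lambda>x. ennreal (x powr \<beta>\<^sub>1)) < top" "int_on 0 1 (\<lambda>x. ennreal (x powr \<beta>\<^sub>2)) < top"
    unfolding powr_Ap_condition_def by force+
  then show "\<beta>\<^sub>1 > -1 \<and> \<beta>\<^sub>2 > -1" by (simp add: int_on_powr_0_1_finite_iff)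
next
  assume "\<beta>\<^sub>1 > -1 \<and> \<beta>\<^sub>2 > -1"
  then have \<beta>: "\<beta>\<^sub>1 > -1" "\<beta>\<^sub>2 > -1" "\<gamma> > -1" using assms by auto
  obtain C where "\<And>a b. 0 \<le> a \<Longrightarrow> a < b \<Longrightarrow>
    (power_mass \<beta>\<^sub>1 a b / power_mass \<gamma> a b) * (power_mass \<beta>\<^sub>2 a b / power_mass \<gamma> a b) powr (p - 1) \<le> C"
    using power_mass_Ap_bounded[OF \<beta>(1,2) assms] by blast
  with \<beta> show "powr_Ap_condition p \<gamma> \<beta>\<^sub>1 \<beta>\<^sub>2"
    unfolding powr_Ap_condition_def by (auto simp: int_on_powr power_mass_pos[THEN less_imp_le])
qed

lemma int_on_powr_mult_powr:
  "0 \<le> a \<Longrightarrow> int_on a b (\<lambda>x. ennreal (x powr \<alpha> * x powr c)) = int_on a b (\<lambda>x. ennreal (x powr (\<alpha> + c)))"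
  by (intro int_on_cong) (simp add: powr_add)

lemma int_on_neg_pow_powr_mult:
  assumes "0 \<le> a"
  shows "int_on a b (\<lambda>x. neg_pow p (x powr \<alpha>) * ennreal (x powr c))
       = int_on a b (\<lambda>x. ennreal (x powr (c - \<alpha> / (p - 1))))"
proof (rule int_on_cong)
  fix x assume "a < x"
  then have "x > 0" using assms by simp
  then show "neg_pow p (x powr \<alpha>) * ennreal (x powr c) = ennreal (x powr (c - \<alpha> / (p - 1)))"
    unfolding neg_pow_def by (simp add: ennreal_mult[symmetric] powr_powr powr_add[symmetric])
qed

lemma int_on_powr_mult_neg_pow:
  "0 \<le> a \<Longrightarrow> int_on a b (\<lambda>x. ennreal (x powr c) * neg_pow p (x powr \<alpha>))
     = int_on a b (\<lambda>x. ennreal (x powr (c - \<alpha> / (p - 1))))"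
  using int_on_neg_pow_powr_mult by (simp add: mult.commute)

lemma powr_in_Ap_mu_iff:
  assumes "lam \<ge> 0" "p > 1"
  shows "(\<lambda>t. t powr \<alpha>) \<in> Ap_mu lam p \<longleftrightarrow> -1 - 2 * lam < \<alpha> \<and> \<alpha> < p - 1 + 2 * lam * (p - 1)"
proof -
  have "(\<lambda>t. t powr \<alpha>) \<in> borel_measurable lborel" by measurable
  then have "(\<lambda>t. t powr \<alpha>) \<in> Ap_mu lam p \<longleftrightarrow>
      powr_Ap_condition p (2 * lam) (\<alpha> + 2 * lam) (2 * lam - \<alpha> / (p - 1))"
    unfolding Ap_mu_def powr_Ap_condition_def mu_meas_def
    by (simp add: int_on_powr_mult_powr int_on_neg_pow_powr_mult)
  also have "\<dots> \<longleftrightarrow> \<alpha> + 2 * lam > -1 \<and> 2 * lam - \<alpha> / (p - 1) > -1"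
    using assms by (intro powr_Ap_condition_iff) (auto simp: field_simps)
  also have "\<dots> \<longleftrightarrow> -1 - 2 * lam < \<alpha> \<and> \<alpha> < p - 1 + 2 * lam * (p - 1)"
    using assms by (auto simp: field_simps)
  finally show ?thesis .
qed

lemma powr_in_Ap_tilde_iff:
  assumes "lam \<ge> -1/2" "p > 1"
  shows "(\<lambda>t. t powr \<alpha>) \<in> Ap_tilde p lam \<longleftrightarrow> -1 < \<alpha> \<and> \<alpha> < p - 1 + (2 * lam + 1) * p"
proof -
  have "p - 1 \<noteq> 0" using assms by simp
  then have dual_exponent:
    "(2 * lam + 1) * conj_exp p - \<alpha> / (p - 1) = ((2 * lam + 1) * p - \<alpha>) / (p - 1)"
    by (simp add: conj_exp_def diff_divide_distrib)
  have balanced: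
    "\<alpha> - (2 * lam + 1) + ((2 * lam + 1) * conj_exp p - \<alpha> / (p - 1) - (2 * lam + 1)) * (p - 1) = 0"
    unfolding dual_exponent using \<open>p - 1 \<noteq> 0\<close> by (simp add: field_simps)
  have "(\<lambda>t. t powr \<alpha>) \<in> borel_measurable lborel" by measurable
  then have "(\<lambda>t. t powr \<alpha>) \<in> Ap_tilde p lam \<longleftrightarrow>
      powr_Ap_condition p (2 * lam + 1) \<alpha> ((2 * lam + 1) * conj_exp p - \<alpha> / (p - 1))"
    unfolding Ap_tilde_def powr_Ap_condition_def nu_meas_def
    \<comment> \<open>the strict bound in the definition of Ap_tilde is immaterial: pass from C to C + 1\<close>
    by (simp add: int_on_powr_mult_neg_pow) (meson dual_order.strict_implies_order gt_ex order.strict_trans1)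
  also have "\<dots> \<longleftrightarrow> \<alpha> > -1 \<and> (2 * lam + 1) * conj_exp p - \<alpha> / (p - 1) > -1"
    using assms balanced by (intro powr_Ap_condition_iff) auto
  also have "\<dots> \<longleftrightarrow> -1 < \<alpha> \<and> \<alpha> < p - 1 + (2 * lam + 1) * p"
    unfolding dual_exponent using assms by (auto simp: field_simps)
  finally show ?thesis .
qed

theorem proposition1p1:
  fixes lam p alpha :: real
  assumes "lam > 0" and "1 < p"
  shows "((\<lambda>t. t powr alpha) \<in> Ap_mu lam p \<longleftrightarrow>
            -1 - 2 * lam < alpha \<and> alpha < p - 1 + 2 * lam * (p - 1))
       \<and> ((\<lambda>t. t powr alpha) \<in> Ap_tilde p lam \<longleftrightarrow>
            -1 < alpha \<and> alpha < p - 1 + (2 * lam + 1) * p)"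
  using assms by (simp add: powr_in_Ap_mu_iff powr_in_Ap_tilde_iff)

end
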